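(* Let $\mathcal C$ be the smallest set of completely characterizable cardinals that contains $\aleph_0$ and is closed under successors ($\kappa\in\mathcal C\Rightarrow\kappa^+\in\mathcal C$), countable unions (if $\kappa_n\in\mathcal C$ for $n\in\omega$ then $\sup_n\kappa_n\in\mathcal C$), countable products (if $\kappa_n\in\mathcal C$ for $n\in\omega$ then $\prod_n\kappa_n\in\mathcal C$) and powerset ($\kappa\in\mathcal C\Rightarrow 2^\kappa\in\mathcal C$). Then $\mathcal C$ is closed under powers: if $\kappa,\mu\in\mathcal C$ then $\kappa^{\mu}\in\mathcal C$.
   Context: All languages are countable; $L_{\omega_1,\omega}$ allows countable conjunctions/disjunctions and finite quantification. A sentence $\sigma\in L_{\omega_1,\omega}$ is complete if for every $L_{\omega_1,\omega}$-sentence $\tau$, either $\sigma\Rightarrow\tau$ or $\sigma\Rightarrow\neg\tau$ is valid. An infinite cardinal $\mu$ is completely characterizable if there is a complete $L_{\omega_1,\omega}$-sentence with models in all infinite cardinalities $\le\mu$ and no model of cardinality $\mu^+$. *)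

theory Defs
  imports Main "HOL-Library.Equipollence" "HOL-Library.FuncSet"
begin

text \<open>
  Cardinals are represented by sets (a set A stands for its cardinality),
  all taken as subsets of a fixed ambient type 'a; membership is invariant
  under equipollence.
\<close>

inductive_set CC :: "'a set set" where
  aleph0: "B \<approx> (UNIV :: nat set) \<Longrightarrow> B \<in> CC"
| succ: "A \<in> CC \<Longrightarrow> (card_of B, cardSuc (card_of (A :: 'a set))) \<in> ordIso \<Longrightarrow> B \<in> CC"
| sup: "(\<And>n. (A :: nat \<Rightarrow> 'a set) n \<in> CC) \<Longrightarrow> (\<And>n. A n \<lesssim> B)
        \<Longrightarrow> (\<And>X :: 'a set. (\<forall>n. A n \<lesssim> X) \<Longrightarrow> B \<lesssim> X) \<Longrightarrow> B \<in> CC"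
| prod: "(\<And>n. (A :: nat \<Rightarrow> 'a set) n \<in> CC) \<Longrightarrow> B \<approx> Pi\<^sub>E (UNIV :: nat set) A \<Longrightarrow> B \<in> CC"
| pow: "A \<in> CC \<Longrightarrow> B \<approx> Pow A \<Longrightarrow> B \<in> CC"

end

theory Submission
  imports Defs
begin

unbundle cardinal_syntax

text \<open>Induct on \<open>K \<in> CC\<close> with \<open>M\<close> fixed, computing \<open>K\<^sup>M\<close> from powers already known to
  lie in \<open>CC\<close>. If \<open>K \<le> 2\<^sup>M\<close> then \<open>K\<^sup>M = 2\<^sup>M\<close>; this covers \<open>\<aleph>\<^sub>0\<close> and the successor and
  powerset steps whenever the new cardinal is small compared with \<open>M\<close>. Otherwise, for
  \<open>K = \<lambda>\<^sup>+\<close> with \<open>M \<le> \<lambda>\<close> Hausdorff's formula gives \<open>K\<^sup>M = max K (\<lambda>\<^sup>M)\<close>; for \<open>K = 2\<^sup>\<lambda>\<close>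
  with \<open>M \<le> \<lambda>\<close> we get \<open>K\<^sup>M = 2\<^bsup>\<lambda>\<cdot>M\<^esup> = K\<close>; for \<open>K = \<Prod>\<^sub>n \<kappa>\<^sub>n\<close> we have \<open>K\<^sup>M = \<Prod>\<^sub>n \<kappa>\<^sub>n\<^sup>M\<close>; and for
  \<open>K = sup\<^sub>n \<kappa>\<^sub>n\<close> the bounds \<open>K \<le> \<Prod>\<^sub>n \<kappa>\<^sub>n\<close> and \<open>(K\<^sup>M)\<^bsup>\<aleph>\<^sub>0\<^esup> = K\<^sup>M\<close> squeeze \<open>K\<^sup>M\<close> to
  \<open>\<Prod>\<^sub>n \<kappa>\<^sub>n\<^sup>M\<close> as well.\<close>

lemma lepoll_iff_card_of_ordLeq: "A \<lesssim> B \<longleftrightarrow> |A| \<le>o |B|"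
  unfolding lepoll_def card_of_ordLeq[symmetric] by auto

lemma lepoll_total: "A \<lesssim> B \<or> B \<lesssim> A"
  using ordLeq_total[OF card_of_Well_order card_of_Well_order, of A B]
  by (simp add: lepoll_iff_card_of_ordLeq)

lemma lepoll_infinite: "A \<lesssim> B \<Longrightarrow> infinite A \<Longrightarrow> infinite B"
  by (metis infinite_le_lepoll lepoll_trans)

lemma ex_eqpoll_if_lepoll: "X \<lesssim> (B :: 'a set) \<Longrightarrow> \<exists>C :: 'a set. C \<approx> X"
  unfolding lepoll_def by (metis inj_on_image_eqpoll_self)

lemma Times_eqpoll_infinite:
  assumes "infinite A" "B \<lesssim> A" "B \<noteq> {}"
  shows "A \<times> B \<approx> A" and "B \<times> A \<approx> A"
  using card_of_Times_infinite[OF assms(1,3)] assms(2)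
  by (simp_all add: eqpoll_iff_card_of_ordIso lepoll_iff_card_of_ordLeq)

lemma Func_eq_PiE: "Func A B = A \<rightarrow>\<^sub>E B"
  by (auto simp: Func_def PiE_def extensional_def)

lemma Pow_eqpoll_funcset_bool: "Pow A \<approx> A \<rightarrow>\<^sub>E (UNIV :: bool set)"
  using card_of_Pow_Func by (simp add: eqpoll_iff_card_of_ordIso Func_eq_PiE)

lemma funcset_Times_eqpoll: "A \<times> B \<rightarrow>\<^sub>E C \<approx> A \<rightarrow>\<^sub>E (B \<rightarrow>\<^sub>E C)"
  using card_of_Func_Times by (simp add: eqpoll_iff_card_of_ordIso Func_eq_PiE)

lemma funcset_eqpoll_cong:
  assumes A: "A \<approx> A'" and B: "B \<approx> B'"
  shows "A \<rightarrow>\<^sub>E B \<approx> A' \<rightarrow>\<^sub>E B'"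
proof (cases "B = {}")
  case True
  then have "B' = {}" using eqpoll_sym[OF B] by simp
  have "A = {} \<longleftrightarrow> A' = {}" using A eqpoll_sym[OF A] by auto
  show ?thesis
  proof (cases "A = {}")
    case False
    then obtain a a' where "a \<in> A" "a' \<in> A'" using \<open>A = {} \<longleftrightarrow> A' = {}\<close> by blast
    then show ?thesis using \<open>B = {}\<close> \<open>B' = {}\<close> by simp
  qed (use \<open>A = {} \<longleftrightarrow> A' = {}\<close> in \<open>simp add: singleton_eqpoll\<close>)
next
  case False
  then have "B' \<noteq> {}" using B by auto
  show ?thesis
  proof (rule lepoll_antisym)
    show "A \<rightarrow>\<^sub>E B \<lesssim> A' \<rightarrow>\<^sub>E B'"
      using False A B by (simp add: eqpoll_imp_lepoll lepoll_funcset)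
    show "A' \<rightarrow>\<^sub>E B' \<lesssim> A \<rightarrow>\<^sub>E B"
      using \<open>B' \<noteq> {}\<close> A B by (simp add: eqpoll_imp_lepoll eqpoll_sym lepoll_funcset)
  qed
qed

lemma PiE_eqpoll_cong: "(\<And>i. i \<in> I \<Longrightarrow> A i \<approx> C i) \<Longrightarrow> Pi\<^sub>E I A \<approx> Pi\<^sub>E I C"
  by (intro lepoll_antisym lepoll_PiE) (simp_all add: eqpoll_imp_lepoll eqpoll_sym)

lemma funcset_PiE_eqpoll: "A \<rightarrow>\<^sub>E Pi\<^sub>E I B \<approx> Pi\<^sub>E I (\<lambda>i. A \<rightarrow>\<^sub>E B i)"
  unfolding eqpoll_def
proof
  show "bij_betw (\<lambda>f. \<lambda>i\<in>I. \<lambda>a\<in>A. f a i) (A \<rightarrow>\<^sub>E Pi\<^sub>E I B) (Pi\<^sub>E I (\<lambda>i. A \<rightarrow>\<^sub>E B i))"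
    by (rule bij_betw_byWitness[where f' = "\<lambda>g. \<lambda>a\<in>A. \<lambda>i\<in>I. g i a"])
       (auto simp: PiE_iff extensional_def fun_eq_iff)
qed

lemma Pow_lepoll_mono: "A \<lesssim> B \<Longrightarrow> Pow A \<lesssim> Pow B"
  unfolding lepoll_def by (meson image_Pow_mono inj_on_image_Pow)

lemma lepoll_funcset_const:
  assumes "A \<noteq> {}" shows "B \<lesssim> A \<rightarrow>\<^sub>E B"
  unfolding lepoll_def
proof (intro exI conjI)
  obtain a where a: "a \<in> A" using assms by blast
  show "inj_on (\<lambda>b. \<lambda>x\<in>A. b) B"
    by (rule inj_onI) (metis a restrict_apply')
  show "(\<lambda>b. \<lambda>x\<in>A. b) ` B \<subseteq> A \<rightarrow>\<^sub>E B" by auto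
qed

lemma PiE_proj_lepoll:
  assumes "\<And>i. i \<in> I \<Longrightarrow> A i \<noteq> {}" "k \<in> I"
  shows "A k \<lesssim> Pi\<^sub>E I A"
  unfolding lepoll_iff
proof (intro exI subsetI)
  fix x assume x: "x \<in> A k"
  let ?f = "\<lambda>i\<in>I. if i = k then x else (SOME y. y \<in> A i)"
  have "?f \<in> Pi\<^sub>E I A" using x assms(1) by (auto simp: some_in_eq)
  then show "x \<in> (\<lambda>f. f k) ` Pi\<^sub>E I A" by (rule rev_image_eqI) (simp add: assms(2))
qed

lemma UN_lepoll_PiE:
  assumes "\<And>n. infinite (A n)"
  shows "(\<Union>n. A n) \<lesssim> Pi\<^sub>E (UNIV :: nat set) A"
proof -
  have A_le: "A n \<lesssim> Pi\<^sub>E UNIV A" for n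
    by (rule PiE_proj_lepoll) (metis assms finite.emptyI, simp)
  then have inf: "infinite (Pi\<^sub>E UNIV A)" using assms lepoll_infinite by blast
  have "|\<Union>n. A n| \<le>o |Pi\<^sub>E UNIV A|"
  proof (rule card_of_UNION_ordLeq_infinite[OF inf])
    show "|UNIV :: nat set| \<le>o |Pi\<^sub>E UNIV A|"
      using inf by (simp add: infinite_le_lepoll lepoll_iff_card_of_ordLeq)
    show "\<forall>n\<in>UNIV. |A n| \<le>o |Pi\<^sub>E UNIV A|"
      using A_le by (simp add: lepoll_iff_card_of_ordLeq)
  qed
  then show ?thesis by (simp add: lepoll_iff_card_of_ordLeq)
qed

lemma funcset_Pow_eqpoll:
  assumes "infinite A" "M \<lesssim> A" "M \<noteq> {}"
  shows "M \<rightarrow>\<^sub>E Pow A \<approx> Pow A"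
proof -
  have "M \<rightarrow>\<^sub>E Pow A \<approx> M \<rightarrow>\<^sub>E (A \<rightarrow>\<^sub>E (UNIV :: bool set))"
    by (rule funcset_eqpoll_cong[OF eqpoll_refl Pow_eqpoll_funcset_bool])
  also have "\<dots> \<approx> M \<times> A \<rightarrow>\<^sub>E (UNIV :: bool set)"
    by (rule eqpoll_sym[OF funcset_Times_eqpoll])
  also have "\<dots> \<approx> A \<rightarrow>\<^sub>E (UNIV :: bool set)"
    by (rule funcset_eqpoll_cong[OF Times_eqpoll_infinite(2)[OF assms] eqpoll_refl])
  also have "\<dots> \<approx> Pow A" by (rule eqpoll_sym[OF Pow_eqpoll_funcset_bool])
  finally show ?thesis .
qed

lemma funcset_eqpoll_Pow:
  assumes "infinite M" "(UNIV :: bool set) \<lesssim> K" "K \<lesssim> Pow M"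
  shows "M \<rightarrow>\<^sub>E K \<approx> Pow M"
proof (rule lepoll_antisym)
  have "M \<rightarrow>\<^sub>E K \<lesssim> M \<rightarrow>\<^sub>E Pow M" by (rule lepoll_funcset_right[OF assms(3)])
  also have "\<dots> \<approx> Pow M" by (rule funcset_Pow_eqpoll[OF assms(1) lepoll_refl]) (use assms(1) in auto)
  finally show "M \<rightarrow>\<^sub>E K \<lesssim> Pow M" .
  have "Pow M \<approx> M \<rightarrow>\<^sub>E (UNIV :: bool set)" by (rule Pow_eqpoll_funcset_bool)
  also have "\<dots> \<lesssim> M \<rightarrow>\<^sub>E K" by (rule lepoll_funcset_right[OF assms(2)])
  finally show "Pow M \<lesssim> M \<rightarrow>\<^sub>E K" .
qed

lemma PiE_nat_funcset_eqpoll: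
  assumes "infinite M"
  shows "Pi\<^sub>E (UNIV :: nat set) (\<lambda>_. M \<rightarrow>\<^sub>E K) \<approx> M \<rightarrow>\<^sub>E K"
proof -
  have "Pi\<^sub>E (UNIV :: nat set) (\<lambda>_. M \<rightarrow>\<^sub>E K) \<approx> (UNIV :: nat set) \<times> M \<rightarrow>\<^sub>E K"
    by (rule eqpoll_sym[OF funcset_Times_eqpoll])
  also have "\<dots> \<approx> M \<rightarrow>\<^sub>E K"
    using assms by (intro funcset_eqpoll_cong Times_eqpoll_infinite(2)) (auto simp: infinite_le_lepoll)
  finally show ?thesis .
qed

lemma lepoll_if_cardSuc:
  assumes "|K| =o cardSuc |A|"
  shows "A \<lesssim> K"
  using ordLess_ordIso_trans[OF cardSuc_greater[OF card_of_Card_order] ordIso_symmetric[OF assms]]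
  by (simp add: lepoll_iff_card_of_ordLeq ordLess_imp_ordLeq)

lemma cardSuc_lepoll_dichotomy:
  assumes "|K| =o cardSuc |A|"
  shows "K \<lesssim> M \<or> M \<lesssim> A"
proof (rule disjCI)
  assume "\<not> M \<lesssim> A"
  then have "|A| <o |M|"
    by (simp add: lepoll_iff_card_of_ordLeq not_ordLeq_iff_ordLess[OF card_of_Well_order card_of_Well_order])
  then have "cardSuc |A| \<le>o |M|" by (rule cardSuc_least[OF card_of_Card_order card_of_Card_order])
  then show "K \<lesssim> M" using assms ordIso_ordLeq_trans by (auto simp: lepoll_iff_card_of_ordLeq)
qed

lemma under_cardSuc_lepoll:
  assumes "infinite A" "|K| =o cardSuc |A|" "i \<in> K"
  shows "under (card_of K) i \<lesssim> A"
proof -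
  let ?r = "|K|"
  have "|underS ?r i| <o ?r"
    by (rule card_of_underS[OF card_of_Card_order]) (simp add: assms(3) Field_card_of)
  then have "|underS ?r i| <o cardSuc |A|"
    using assms(2) by (rule ordLess_ordIso_trans)
  then have "underS ?r i \<lesssim> A"
    by (simp add: lepoll_iff_card_of_ordLeq cardSuc_ordLeq_ordLess[OF card_of_Card_order card_of_Card_order])
  moreover have "under ?r i = insert i (underS ?r i)"
    using Refl_under_underS[OF wo_rel.REFL[OF wo_rel.intro[OF card_of_Well_order[of K]]]] assms(3)
    by (auto simp: Field_card_of)
  ultimately show ?thesis
    using assms(1) by (metis finite_insert finite_lepoll_infinite infinite_insert_eqpoll lepoll_trans1)
qed

text \<open>Hausdorff's formula: by regularity of the successor cardinal \<open>|K|\<close>, a function from a set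
  of size at most \<open>|A|\<close> into \<open>K\<close> has its range inside some initial segment of size \<open>\<le> |A|\<close>.\<close>

lemma funcset_cardSuc_lepoll:
  assumes A: "infinite A" and MA: "M \<lesssim> A" and K: "|K| =o cardSuc |A|"
  shows "M \<rightarrow>\<^sub>E K \<lesssim> K \<times> (M \<rightarrow>\<^sub>E A)"
proof -
  let ?r = "|K|"
  have Cinf: "Cinfinite |A|"
    using A by (simp add: cinfinite_def card_of_card_order_on Field_card_of)
  have reg: "regularCard ?r"
    using regularCard_ordIso[OF ordIso_symmetric[OF K] Cinfinite_cardSuc[OF Cinf] regularCard_cardSuc[OF Cinf]] .
  have wo: "wo_rel ?r" by (rule wo_rel.intro[OF card_of_Well_order])
  have chain: "relChain ?r (under ?r)"
    unfolding relChain_def using under_incr[OF wo_rel.TRANS[OF wo]] by blast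
  have bounded: "\<exists>i\<in>K. f \<in> M \<rightarrow>\<^sub>E under ?r i" if f: "f \<in> M \<rightarrow>\<^sub>E K" for f
  proof -
    have covered: "f ` M \<subseteq> (\<Union>i\<in>Field ?r. under ?r i)"
      using f Refl_under_in[OF wo_rel.REFL[OF wo]] by (fastforce simp: Field_card_of)
    have small: "|f ` M| <o ?r"
    proof -
      have "|f ` M| \<le>o |A|"
        using card_of_image MA ordLeq_transitive lepoll_iff_card_of_ordLeq by blast
      then have "|f ` M| <o cardSuc |A|"
        using cardSuc_ordLeq_ordLess[OF card_of_Card_order card_of_Card_order] by blast
      then show ?thesis using K ordLess_ordIso_trans ordIso_symmetric by blast
    qed
    obtain i where "i \<in> Field ?r" "f ` M \<subseteq> under ?r i"
      using regularCard_UNION[OF card_of_Card_order reg chain covered small] by blast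
    then show ?thesis using f by (auto simp: PiE_iff Field_card_of)
  qed
  have "M \<rightarrow>\<^sub>E K \<subseteq> snd ` (SIGMA i:K. M \<rightarrow>\<^sub>E under ?r i)"
    using bounded by force
  then have "M \<rightarrow>\<^sub>E K \<lesssim> (SIGMA i:K. M \<rightarrow>\<^sub>E under ?r i)"
    by (rule subset_image_lepoll)
  also have "\<dots> \<lesssim> K \<times> (M \<rightarrow>\<^sub>E A)"
    by (rule Sigma_lepoll_mono) (auto intro: lepoll_funcset_right under_cardSuc_lepoll[OF A K])
  finally show ?thesis .
qed

lemma funcset_cardSuc_eqpoll_cases:
  assumes A: "infinite A" and MA: "M \<lesssim> A" and M: "M \<noteq> {}" and K: "|K| =o cardSuc |A|"
  shows "M \<rightarrow>\<^sub>E K \<approx> K \<or> M \<rightarrow>\<^sub>E K \<approx> M \<rightarrow>\<^sub>E A"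
proof -
  have AK: "A \<lesssim> K" by (rule lepoll_if_cardSuc[OF K])
  have K_inf: "infinite K" using lepoll_infinite[OF AK A] .
  have MA_inf: "infinite (M \<rightarrow>\<^sub>E A)" using lepoll_infinite[OF lepoll_funcset_const[OF M] A] .
  have upper: "M \<rightarrow>\<^sub>E K \<lesssim> K \<times> (M \<rightarrow>\<^sub>E A)" by (rule funcset_cardSuc_lepoll[OF A MA K])
  consider "M \<rightarrow>\<^sub>E A \<lesssim> K" | "K \<lesssim> M \<rightarrow>\<^sub>E A" using lepoll_total by blast
  then show ?thesis
  proof cases
    case 1
    have "M \<rightarrow>\<^sub>E K \<lesssim> K"
      using lepoll_trans2[OF upper Times_eqpoll_infinite(1)[OF K_inf 1 infinite_imp_nonempty[OF MA_inf]]] .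
    then show ?thesis using lepoll_funcset_const[OF M] lepoll_antisym by blast
  next
    case 2
    have "M \<rightarrow>\<^sub>E K \<lesssim> M \<rightarrow>\<^sub>E A"
      using lepoll_trans2[OF upper Times_eqpoll_infinite(2)[OF MA_inf 2 infinite_imp_nonempty[OF K_inf]]] .
    then show ?thesis using lepoll_funcset_right[OF AK] lepoll_antisym by blast
  qed
qed

lemma CC_eqpoll:
  fixes B B' :: "'a set"
  assumes "B \<in> CC" "B' \<approx> B"
  shows "B' \<in> CC"
  using assms(1)
proof (cases rule: CC.cases)
  case aleph0
  then show ?thesis using CC.aleph0 eqpoll_trans[OF assms(2)] by blast
next
  case (succ A)
  have "|B'| =o |B|" using assms(2) eqpoll_iff_card_of_ordIso by blast
  then show ?thesis using CC.succ[OF succ(1)] succ(2) ordIso_transitive by blast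
next
  case (sup A)
  show ?thesis
  proof (rule CC.sup[of A])
    show "A n \<in> CC" for n by (rule sup(1))
    show "A n \<lesssim> B'" for n by (rule lepoll_trans2[OF sup(2) eqpoll_sym[OF assms(2)]])
    show "B' \<lesssim> X" if "\<forall>n. A n \<lesssim> X" for X :: "'a set"
      by (rule lepoll_trans1[OF assms(2) sup(3)[OF that]])
  qed
next
  case (prod A)
  then show ?thesis using CC.prod eqpoll_trans[OF assms(2)] by blast
next
  case (pow A)
  then show ?thesis using CC.pow eqpoll_trans[OF assms(2)] by blast
qed

lemma CC_infinite: "B \<in> CC \<Longrightarrow> infinite B"
proof (induction rule: CC.induct)
  case (aleph0 B)
  then show ?case using eqpoll_finite_iff by blast
next
  case (succ A B)
  then show ?case using lepoll_if_cardSuc lepoll_infinite by blast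
next
  case (sup A B)
  then show ?case using lepoll_infinite by blast
next
  case (prod A B)
  have "A 0 \<lesssim> Pi\<^sub>E UNIV A" by (rule PiE_proj_lepoll) (metis prod.IH finite.emptyI, simp)
  then show ?case using prod.IH prod.hyps(2) lepoll_infinite eqpoll_finite_iff by blast
next
  case (pow A B)
  then show ?case using lepoll_infinite[OF lepoll_Pow_self] eqpoll_finite_iff by blast
qed

text \<open>The bound \<open>F n \<lesssim> X\<close> by a set of the ambient type lets each factor be represented
  by a subset of that type.\<close>

lemma CC_PiE:
  fixes X B :: "'a set" and F :: "nat \<Rightarrow> 'b set"
  assumes CC_F: "\<And>n (C :: 'a set). C \<approx> F n \<Longrightarrow> C \<in> CC" and "\<And>n. F n \<lesssim> X" and "B \<approx> Pi\<^sub>E UNIV F"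
  shows "B \<in> CC"
proof -
  obtain C :: "nat \<Rightarrow> 'a set" where C: "\<And>n. C n \<approx> F n"
    using ex_eqpoll_if_lepoll[OF assms(2)] by metis
  have "B \<approx> Pi\<^sub>E UNIV C"
    using assms(3) PiE_eqpoll_cong[of UNIV C F] C eqpoll_sym eqpoll_trans by blast
  then show ?thesis by (rule CC.prod[rotated]) (rule CC_F[OF C])
qed

lemma CC_funcset_if_lepoll_Pow:
  fixes M K B :: "'a set"
  assumes "M \<in> CC" "K \<in> CC" "K \<lesssim> Pow M" "B \<approx> M \<rightarrow>\<^sub>E K"
  shows "B \<in> CC"
proof -
  have "M \<rightarrow>\<^sub>E K \<approx> Pow M"
    using assms(2,3) CC_infinite[OF assms(1)] CC_infinite[OF assms(2)]
    by (intro funcset_eqpoll_Pow) (auto intro: finite_lepoll_infinite)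
  then show ?thesis using CC.pow[OF assms(1)] eqpoll_trans[OF assms(4)] by blast
qed

lemma CC_funcset_aleph0:
  fixes M K B :: "'a set"
  assumes "M \<in> CC" "K \<approx> (UNIV :: nat set)" "B \<approx> M \<rightarrow>\<^sub>E K"
  shows "B \<in> CC"
proof (rule CC_funcset_if_lepoll_Pow[OF assms(1) CC.aleph0[OF assms(2)] _ assms(3)])
  have "K \<lesssim> M" using assms(2) CC_infinite[OF assms(1)] by (simp add: infinite_le_lepoll lepoll_trans1)
  then show "K \<lesssim> Pow M" using lepoll_Pow_self lepoll_trans by blast
qed

lemma CC_funcset_cardSuc:
  fixes A K M B :: "'a set"
  assumes A: "A \<in> CC" and K: "|K| =o cardSuc |A|" and M: "M \<in> CC"
    and IH: "\<And>C :: 'a set. C \<approx> M \<rightarrow>\<^sub>E A \<Longrightarrow> C \<in> CC" and B: "B \<approx> M \<rightarrow>\<^sub>E K"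
  shows "B \<in> CC"
proof (cases "K \<lesssim> M")
  case True
  then show ?thesis
    using CC_funcset_if_lepoll_Pow[OF M CC.succ[OF A K] _ B] lepoll_Pow_self lepoll_trans by blast
next
  case False
  then have "M \<lesssim> A" using cardSuc_lepoll_dichotomy[OF K] by blast
  then have "M \<rightarrow>\<^sub>E K \<approx> K \<or> M \<rightarrow>\<^sub>E K \<approx> M \<rightarrow>\<^sub>E A"
    using funcset_cardSuc_eqpoll_cases CC_infinite[OF A] CC_infinite[OF M] K by blast
  then show ?thesis
  proof
    assume "M \<rightarrow>\<^sub>E K \<approx> K"
    then show ?thesis by (rule CC_eqpoll[OF CC.succ[OF A K] eqpoll_trans[OF B]])
  next
    assume "M \<rightarrow>\<^sub>E K \<approx> M \<rightarrow>\<^sub>E A"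
    then show ?thesis by (rule IH[OF eqpoll_trans[OF B]])
  qed
qed

lemma CC_funcset_Sup:
  fixes A :: "nat \<Rightarrow> 'a set" and K M B :: "'a set"
  assumes A: "\<And>n. A n \<in> CC" and upper: "\<And>n. A n \<lesssim> K"
    and least: "\<And>X :: 'a set. (\<forall>n. A n \<lesssim> X) \<Longrightarrow> K \<lesssim> X"
    and M: "M \<in> CC" and IH: "\<And>n (C :: 'a set). C \<approx> M \<rightarrow>\<^sub>E A n \<Longrightarrow> C \<in> CC" and B: "B \<approx> M \<rightarrow>\<^sub>E K"
  shows "B \<in> CC"
proof (rule CC_PiE[OF IH])
  show "M \<rightarrow>\<^sub>E A n \<lesssim> B" for n
    using lepoll_trans2[OF lepoll_funcset_right[OF upper] eqpoll_sym[OF B]] .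
  have "K \<lesssim> (\<Union>n. A n)" by (rule least) (auto intro: subset_imp_lepoll)
  also have "\<dots> \<lesssim> Pi\<^sub>E UNIV A" by (rule UN_lepoll_PiE[OF CC_infinite[OF A]])
  finally have "M \<rightarrow>\<^sub>E K \<lesssim> M \<rightarrow>\<^sub>E Pi\<^sub>E UNIV A" by (rule lepoll_funcset_right)
  also have "\<dots> \<approx> Pi\<^sub>E UNIV (\<lambda>n. M \<rightarrow>\<^sub>E A n)" by (rule funcset_PiE_eqpoll)
  finally have lower: "M \<rightarrow>\<^sub>E K \<lesssim> Pi\<^sub>E UNIV (\<lambda>n. M \<rightarrow>\<^sub>E A n)" .
  have "Pi\<^sub>E UNIV (\<lambda>n. M \<rightarrow>\<^sub>E A n) \<lesssim> Pi\<^sub>E (UNIV :: nat set) (\<lambda>_. M \<rightarrow>\<^sub>E K)"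
    by (rule lepoll_PiE) (rule lepoll_funcset_right[OF upper])
  also have "\<dots> \<approx> M \<rightarrow>\<^sub>E K" by (rule PiE_nat_funcset_eqpoll[OF CC_infinite[OF M]])
  finally have "M \<rightarrow>\<^sub>E K \<approx> Pi\<^sub>E UNIV (\<lambda>n. M \<rightarrow>\<^sub>E A n)" by (rule lepoll_antisym[OF lower])
  then show "B \<approx> Pi\<^sub>E UNIV (\<lambda>n. M \<rightarrow>\<^sub>E A n)" by (rule eqpoll_trans[OF B])
qed

lemma CC_funcset_PiE:
  fixes A :: "nat \<Rightarrow> 'a set" and K M B :: "'a set"
  assumes A: "\<And>n. A n \<in> CC" and K: "K \<approx> Pi\<^sub>E UNIV A"
    and IH: "\<And>n (C :: 'a set). C \<approx> M \<rightarrow>\<^sub>E A n \<Longrightarrow> C \<in> CC" and B: "B \<approx> M \<rightarrow>\<^sub>E K"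
  shows "B \<in> CC"
proof (rule CC_PiE[OF IH])
  have "A n \<lesssim> K" for n
    using PiE_proj_lepoll[of UNIV A n] CC_infinite[OF A] K eqpoll_sym lepoll_trans2
    by (metis finite.emptyI UNIV_I)
  then show "M \<rightarrow>\<^sub>E A n \<lesssim> B" for n
    using lepoll_funcset_right B eqpoll_sym lepoll_trans2 by blast
  have "B \<approx> M \<rightarrow>\<^sub>E Pi\<^sub>E UNIV A" by (rule eqpoll_trans[OF B funcset_eqpoll_cong[OF eqpoll_refl K]])
  also have "\<dots> \<approx> Pi\<^sub>E UNIV (\<lambda>n. M \<rightarrow>\<^sub>E A n)" by (rule funcset_PiE_eqpoll)
  finally show "B \<approx> Pi\<^sub>E UNIV (\<lambda>n. M \<rightarrow>\<^sub>E A n)" .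
qed

lemma CC_funcset_Pow:
  fixes A K M B :: "'a set"
  assumes A: "A \<in> CC" and K: "K \<approx> Pow A" and M: "M \<in> CC" and B: "B \<approx> M \<rightarrow>\<^sub>E K"
  shows "B \<in> CC"
proof (cases "A \<lesssim> M")
  case True
  then show ?thesis
    using CC_funcset_if_lepoll_Pow[OF M CC.pow[OF A K] _ B] K Pow_lepoll_mono lepoll_trans1 by blast
next
  case False
  then have "M \<lesssim> A" using lepoll_total by blast
  have "B \<approx> M \<rightarrow>\<^sub>E Pow A" by (rule eqpoll_trans[OF B funcset_eqpoll_cong[OF eqpoll_refl K]])
  also have "\<dots> \<approx> Pow A"
    by (rule funcset_Pow_eqpoll[OF CC_infinite[OF A] \<open>M \<lesssim> A\<close> infinite_imp_nonempty[OF CC_infinite[OF M]]])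
  finally show ?thesis by (rule CC.pow[OF A])
qed

theorem theorem3p8:
  fixes K M B :: "'a set"
  assumes "K \<in> CC" and "M \<in> CC" and "B \<approx> (M \<rightarrow>\<^sub>E K)"
  shows "B \<in> CC"
  using assms(1,3)
proof (induction K arbitrary: B rule: CC.induct)
  case (aleph0 K)
  then show ?case by (rule CC_funcset_aleph0[OF assms(2)])
next
  case (succ A K)
  then show ?case using CC_funcset_cardSuc assms(2) by blast
next
  case (sup A K)
  then show ?case using CC_funcset_Sup[of A K M] assms(2) by blast
next
  case (prod A K)
  then show ?case using CC_funcset_PiE by blast
next
  case (pow A K)
  then show ?case using CC_funcset_Pow assms(2) by blast
qed

end
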